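(* The function $f(n)=\lfloor n/2\rfloor$ (division by two) is not strictly definable.
   Context: We work in the simply typed $\lambda$-calculus (type assignment to untyped $\lambda$-terms) with a single base type $o$, with $\beta\eta$-conversion as equality. For a type $\tau$, $\omega_\tau=(\tau\to\tau)\to\tau\to\tau$. The Church numeral of $n$ is $\rho(n)=\lambda f x.f^{n}x$. A function $f:\mathbb{N}^k\to\mathbb{N}$ is strictly definable if there exist a type $\tau$ and a term $E$ with $\vdash E:\omega_\tau\to\cdots\to\omega_\tau\to\omega_\tau$ ($k$ arguments) such that $E\,\rho(n_1)\cdots\rho(n_k)=_{\beta\eta}\rho(f(n_1,\dots,n_k))$ for all $n_1,\dots,n_k$. *)

theory Defs
  imports Main
begin

datatype ty = O | Arr ty ty

datatype dB = Var nat | App dB dB | Abs dB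

primrec lift :: "dB \<Rightarrow> nat \<Rightarrow> dB" where
  "lift (Var i) k = (if i < k then Var i else Var (Suc i))"
| "lift (App s t) k = App (lift s k) (lift t k)"
| "lift (Abs s) k = Abs (lift s (Suc k))"

primrec subst :: "dB \<Rightarrow> dB \<Rightarrow> nat \<Rightarrow> dB" where
  "subst (Var i) s k = (if k < i then Var (i - 1) else if i = k then s else Var i)"
| "subst (App t u) s k = App (subst t s k) (subst u s k)"
| "subst (Abs t) s k = Abs (subst t (lift s 0) (Suc k))"

inductive beta_eta_step :: "dB \<Rightarrow> dB \<Rightarrow> bool" where
  beta: "beta_eta_step (App (Abs s) t) (subst s t 0)"
| eta: "beta_eta_step (Abs (App (lift s 0) (Var 0))) s"
| appL: "beta_eta_step s t \<Longrightarrow> beta_eta_step (App s u) (App t u)"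
| appR: "beta_eta_step s t \<Longrightarrow> beta_eta_step (App u s) (App u t)"
| abs: "beta_eta_step s t \<Longrightarrow> beta_eta_step (Abs s) (Abs t)"

inductive beta_eta_conv :: "dB \<Rightarrow> dB \<Rightarrow> bool" where
  step: "beta_eta_step s t \<Longrightarrow> beta_eta_conv s t"
| refl: "beta_eta_conv s s"
| sym: "beta_eta_conv s t \<Longrightarrow> beta_eta_conv t s"
| trans: "beta_eta_conv s t \<Longrightarrow> beta_eta_conv t u \<Longrightarrow> beta_eta_conv s u"

text \<open>Curry-style type assignment; the context is a list, index i = de Bruijn index i.\<close>
inductive typing :: "ty list \<Rightarrow> dB \<Rightarrow> ty \<Rightarrow> bool" where
  var: "i < length \<Gamma> \<Longrightarrow> \<Gamma> ! i = T \<Longrightarrow> typing \<Gamma> (Var i) T"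
| abs: "typing (T # \<Gamma>) t U \<Longrightarrow> typing \<Gamma> (Abs t) (Arr T U)"
| app: "typing \<Gamma> s (Arr T U) \<Longrightarrow> typing \<Gamma> t T \<Longrightarrow> typing \<Gamma> (App s t) U"

definition omega :: "ty \<Rightarrow> ty" where
  "omega \<tau> = Arr (Arr \<tau> \<tau>) (Arr \<tau> \<tau>)"

text \<open>Body f^n x of a Church numeral, with f = Var 1, x = Var 0.\<close>
primrec church_body :: "nat \<Rightarrow> dB" where
  "church_body 0 = Var 0"
| "church_body (Suc n) = App (Var 1) (church_body n)"

definition church :: "nat \<Rightarrow> dB" where
  "church n = Abs (Abs (church_body n))"

text \<open>Strict definability of a unary function (case k = 1).\<close>
definition strictly_definable1 :: "(nat \<Rightarrow> nat) \<Rightarrow> bool" where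
  "strictly_definable1 f \<longleftrightarrow>
     (\<exists>\<tau> E. typing [] E (Arr (omega \<tau>) (omega \<tau>)) \<and>
            (\<forall>n. beta_eta_conv (App E (church n)) (church (f n))))"

end

(*
  Simply typed terms are interpreted in the full type hierarchy over a two-element base type,
  where every type denotes a finite set of numbers. There the Church numerals of type omega tau
  form an eventually periodic sequence which still remembers the parity of the numeral (iterate
  the function that swaps 0 and 1). If E defined halving, its denotation would send the value
  of n to the value of n div 2, so every even period 2q of the sequence would halve to the
  period q; an odd period then contradicts parity.

  A beta-eta-conversion may pass through untypable terms, so it is transported into the model
  via a common reduct (Church-Rosser), subject reduction for Church-style annotated terms, and
  the uniqueness of annotations on beta-normal terms.
*)
theory Submission
  imports Defs "HOL-Library.Confluence"
begin

subsection \<open>Commuting confluent relations\<close>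

lemma rtranclp_map:
  assumes "\<And>x y. r x y \<Longrightarrow> r (f x) (f y)"
  shows "r\<^sup>*\<^sup>* x y \<Longrightarrow> r\<^sup>*\<^sup>* (f x) (f y)"
  by (induct rule: rtranclp_induct) (auto intro: rtranclp.rtrancl_into_rtrancl assms)

lemma rtranclp_commute:
  assumes "\<And>x y z. r x y \<Longrightarrow> s x z \<Longrightarrow> \<exists>u. s\<^sup>*\<^sup>* y u \<and> r\<^sup>=\<^sup>= z u"
  shows "r\<^sup>*\<^sup>* x y \<Longrightarrow> s\<^sup>*\<^sup>* x z \<Longrightarrow> \<exists>u. s\<^sup>*\<^sup>* y u \<and> r\<^sup>*\<^sup>* z u"
proof -
  have strip: "\<exists>u. s\<^sup>*\<^sup>* y u \<and> r\<^sup>=\<^sup>= z u" if "s\<^sup>*\<^sup>* x z" "r x y" for x y z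
    using that
  proof (induct rule: rtranclp_induct)
    case base
    then show ?case by blast
  next
    case (step z0 z)
    then obtain u0 where u0: "s\<^sup>*\<^sup>* y u0" "r\<^sup>=\<^sup>= z0 u0" by blast
    show ?case
    proof (cases "z0 = u0")
      case True
      then show ?thesis using u0 step.hyps(2) by (blast intro: rtranclp.rtrancl_into_rtrancl)
    next
      case False
      then obtain u where "s\<^sup>*\<^sup>* u0 u" "r\<^sup>=\<^sup>= z u"
        using u0(2) step.hyps(2) assms by blast
      then show ?thesis using u0(1) by (blast intro: rtranclp_trans)
    qed
  qed
  show "r\<^sup>*\<^sup>* x y \<Longrightarrow> s\<^sup>*\<^sup>* x z \<Longrightarrow> \<exists>u. s\<^sup>*\<^sup>* y u \<and> r\<^sup>*\<^sup>* z u"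
  proof (induct rule: rtranclp_induct)
    case base
    then show ?case by blast
  next
    case (step y0 y)
    then obtain u0 where "s\<^sup>*\<^sup>* y0 u0" "r\<^sup>*\<^sup>* z u0" by blast
    with strip step.hyps(2) obtain u where "s\<^sup>*\<^sup>* y u" "r\<^sup>=\<^sup>= u0 u" by blast
    then show ?case using \<open>r\<^sup>*\<^sup>* z u0\<close> by (blast intro: rtranclp.rtrancl_into_rtrancl)
  qed
qed

lemma confluentp_sup:
  assumes "confluentp r" "confluentp s"
    and commute: "\<And>x y z. r\<^sup>*\<^sup>* x y \<Longrightarrow> s\<^sup>*\<^sup>* x z \<Longrightarrow> \<exists>u. s\<^sup>*\<^sup>* y u \<and> r\<^sup>*\<^sup>* z u"
  shows "confluentp (sup r s)"
proof -
  let ?R = "sup r\<^sup>*\<^sup>* s\<^sup>*\<^sup>*"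
  have "\<exists>u. ?R y u \<and> ?R z u" if "?R x y" "?R x z" for x y z
    using that confluentpD[OF assms(1)] confluentpD[OF assms(2)] commute
    by (metis sup2E sup2I1 sup2I2)
  then have "strong_confluentp ?R"
    by (intro strong_confluentpI) blast
  then have "confluentp ?R"
    by (rule strong_confluentp_imp_confluentp)
  then show ?thesis
    unfolding confluentp_def rtranclp_conversep rtranclp_sup_rtranclp .
qed

declare subst.simps(1) [simp del]

lemma subst_Var_eq [simp]: "subst (Var k) u k = u"
  and subst_Var_gt [simp]: "k < i \<Longrightarrow> subst (Var i) u k = Var (i - 1)"
  and subst_Var_lt [simp]: "i < k \<Longrightarrow> subst (Var i) u k = Var i"
  by (simp_all add: subst.simps(1))

lemma lift_lift: "i \<le> k \<Longrightarrow> lift (lift t i) (Suc k) = lift (lift t k) i"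
  by (induct t arbitrary: i k) auto

lemma lift_subst: "j \<le> i \<Longrightarrow> lift (subst t s j) i = subst (lift t (Suc i)) (lift s i) j"
  by (induct t arbitrary: i j s) (auto simp: subst.simps(1) lift_lift)

lemma lift_subst_lt: "i \<le> j \<Longrightarrow> lift (subst t s j) i = subst (lift t i) (lift s i) (Suc j)"
  by (induct t arbitrary: i j s) (auto simp: subst.simps(1) lift_lift)

lemma subst_lift [simp]: "subst (lift t k) s k = t"
  by (induct t arbitrary: k s) auto

lemma subst_lift_Suc_Var [simp]: "subst (lift t (Suc k)) (Var k) k = t"
  by (induct t arbitrary: k) (auto simp: subst.simps(1))

lemma subst_subst:
  "i \<le> j \<Longrightarrow> subst (subst t (lift v i) (Suc j)) (subst u v j) i = subst (subst t u i) v j"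
  by (induct t arbitrary: i j u v)
    (auto simp: subst.simps(1) lift_lift [symmetric] lift_subst_lt)

lemma lift_inject [simp]: "lift s k = lift t k \<longleftrightarrow> s = t"
  by (induct s arbitrary: t k; case_tac t) auto

lemma lift_Suc_eq_liftD:
  "lift d (Suc k) = lift c i \<Longrightarrow> i \<le> k \<Longrightarrow> \<exists>c'. d = lift c' i \<and> c = lift c' k"
proof (induct d arbitrary: c i k)
  case (Var n)
  then obtain m where c: "c = Var m" by (cases c) (auto split: if_splits)
  show ?case
  proof (cases "n < i")
    case True
    then show ?thesis using Var c by (intro exI[of _ "Var n"]) (auto split: if_splits)
  next
    case False
    then show ?thesis using Var c by (intro exI[of _ "Var (n - 1)"]) (auto split: if_splits)
  qed
next
  case (App d1 d2)
  then obtain c1 c2 where c: "c = App c1 c2" by (cases c) (auto split: if_splits)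
  with App.prems have "lift d1 (Suc k) = lift c1 i" "lift d2 (Suc k) = lift c2 i" by simp_all
  with App obtain c1' c2'
    where "d1 = lift c1' i" "c1 = lift c1' k" "d2 = lift c2' i" "c2 = lift c2' k"
    by blast
  with c show ?case by (intro exI[of _ "App c1' c2'"]) simp
next
  case (Abs d)
  then obtain c1 where c: "c = Abs c1" by (cases c) (auto split: if_splits)
  with Abs.prems have "lift d (Suc (Suc k)) = lift c1 (Suc i)" by simp
  with Abs obtain c1' where "d = lift c1' (Suc i)" "c1 = lift c1' (Suc k)"
    by (meson Suc_le_mono)
  with c show ?case by (intro exI[of _ "Abs c1'"]) simp
qed

lemma App_eq_lift_iff:
  "App a b = lift s k \<longleftrightarrow> (\<exists>a' b'. s = App a' b' \<and> a = lift a' k \<and> b = lift b' k)"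
  by (cases s) auto

lemma Abs_eq_lift_iff: "Abs a = lift s k \<longleftrightarrow> (\<exists>a'. s = Abs a' \<and> a = lift a' (Suc k))"
  by (cases s) auto

lemma Var_eq_lift_iff:
  "Var i = lift s k \<longleftrightarrow> (if i < k then s = Var i else k < i \<and> s = Var (i - 1))"
  by (cases s) auto

subsection \<open>Confluence of beta-eta reduction\<close>

inductive beta :: "dB \<Rightarrow> dB \<Rightarrow> bool" where
  root: "beta (App (Abs s) t) (subst s t 0)"
| appL: "beta s t \<Longrightarrow> beta (App s u) (App t u)"
| appR: "beta s t \<Longrightarrow> beta (App u s) (App u t)"
| abs: "beta s t \<Longrightarrow> beta (Abs s) (Abs t)"

inductive eta :: "dB \<Rightarrow> dB \<Rightarrow> bool" where
  root: "eta (Abs (App (lift s 0) (Var 0))) s"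
| appL: "eta s t \<Longrightarrow> eta (App s u) (App t u)"
| appR: "eta s t \<Longrightarrow> eta (App u s) (App u t)"
| abs: "eta s t \<Longrightarrow> eta (Abs s) (Abs t)"

lemma beta_eta_step_eq_sup: "beta_eta_step = sup beta eta"
proof (intro ext iffI)
  show "sup beta eta s t" if "beta_eta_step s t" for s t
    using that by induct (auto intro: beta.intros eta.intros)
  have "beta_eta_step s t" if "beta s t" for s t
    using that by induct (auto intro: beta_eta_step.intros)
  moreover have "beta_eta_step s t" if "eta s t" for s t
    using that by induct (auto intro: beta_eta_step.intros)
  ultimately show "beta_eta_step s t" if "sup beta eta s t" for s t
    using that by blast
qed

lemma rtranclp_beta_App:
  "beta\<^sup>*\<^sup>* s s' \<Longrightarrow> beta\<^sup>*\<^sup>* t t' \<Longrightarrow> beta\<^sup>*\<^sup>* (App s t) (App s' t')"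
  using rtranclp_map[of beta "\<lambda>s. App s t"] rtranclp_map[of beta "App s'"]
  by (meson beta.appL beta.appR rtranclp_trans)

lemma rtranclp_beta_Abs: "beta\<^sup>*\<^sup>* s s' \<Longrightarrow> beta\<^sup>*\<^sup>* (Abs s) (Abs s')"
  by (rule rtranclp_map) (rule beta.abs)

inductive par_beta :: "dB \<Rightarrow> dB \<Rightarrow> bool" where
  var: "par_beta (Var n) (Var n)"
| abs: "par_beta s t \<Longrightarrow> par_beta (Abs s) (Abs t)"
| app: "par_beta s s' \<Longrightarrow> par_beta t t' \<Longrightarrow> par_beta (App s t) (App s' t')"
| root: "par_beta s s' \<Longrightarrow> par_beta t t' \<Longrightarrow> par_beta (App (Abs s) t) (subst s' t' 0)"

declare par_beta.intros [intro]

inductive_cases par_beta_VarE [elim!]: "par_beta (Var n) t"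
inductive_cases par_beta_AbsE [elim!]: "par_beta (Abs s) t"
inductive_cases par_beta_AppE [elim!]: "par_beta (App s t) u"

lemma par_beta_refl [simp]: "par_beta t t"
  by (induct t) auto

lemma beta_le_par_beta: "beta \<le> par_beta"
proof
  show "par_beta s t" if "beta s t" for s t
    using that by induct auto
qed

lemma par_beta_le_rtranclp_beta: "par_beta \<le> beta\<^sup>*\<^sup>*"
proof
  show "beta\<^sup>*\<^sup>* s t" if "par_beta s t" for s t
    using that
  proof induct
    case (root s s' t t')
    then have "beta\<^sup>*\<^sup>* (App (Abs s) t) (App (Abs s') t')"
      by (intro rtranclp_beta_App rtranclp_beta_Abs)
    then show ?case by (simp add: rtranclp.rtrancl_into_rtrancl beta.root)
  qed (auto intro: rtranclp_beta_App rtranclp_beta_Abs)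
qed

lemma par_beta_lift: "par_beta s t \<Longrightarrow> par_beta (lift s k) (lift t k)"
proof (induct arbitrary: k rule: par_beta.induct)
  case (root s s' t t')
  then show ?case using par_beta.root[of "lift s (Suc k)" "lift s' (Suc k)" "lift t k" "lift t' k"]
    by (simp add: lift_subst)
qed auto

lemma par_beta_subst:
  "par_beta t t' \<Longrightarrow> par_beta s s' \<Longrightarrow> par_beta (subst t s i) (subst t' s' i)"
proof (induct t t' arbitrary: s s' i rule: par_beta.induct)
  case (var n)
  then show ?case by (simp add: subst.simps(1))
next
  case (root u u' t t')
  then show ?case
    using par_beta.root[of "subst u (lift s 0) (Suc i)" "subst u' (lift s' 0) (Suc i)"]
    by (simp add: subst_subst [symmetric] par_beta_lift)
qed (auto simp: par_beta_lift)

fun complete_development :: "dB \<Rightarrow> dB" where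
  "complete_development (Var n) = Var n"
| "complete_development (App (Abs s) t) =
     subst (complete_development s) (complete_development t) 0"
| "complete_development (App s t) = App (complete_development s) (complete_development t)"
| "complete_development (Abs s) = Abs (complete_development s)"

lemma par_beta_complete_development: "par_beta s t \<Longrightarrow> par_beta t (complete_development s)"
proof (induct s arbitrary: t rule: complete_development.induct)
  case (2 s u)
  then show ?case by (auto intro: par_beta_subst)
qed auto

lemma confluentp_beta: "confluentp beta"
proof -
  have "strong_confluentp par_beta"
    by (rule strong_confluentpI) (blast intro: par_beta_complete_development)
  then have "confluentp par_beta"
    by (rule strong_confluentp_imp_confluentp)
  moreover have "par_beta\<^sup>*\<^sup>* = beta\<^sup>*\<^sup>*"
    using beta_le_par_beta par_beta_le_rtranclp_beta by (rule rtranclp_subset)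
  ultimately show ?thesis
    unfolding confluentp_def rtranclp_conversep by simp
qed

inductive_cases eta_VarE [elim!]: "eta (Var i) t"
inductive_cases eta_AbsE [elim!]: "eta (Abs s) t"
inductive_cases eta_AppE [elim!]: "eta (App s t) u"
inductive_cases beta_VarE [elim!]: "beta (Var i) t"
inductive_cases beta_AppE [elim!]: "beta (App s t) u"

lemma rtranclp_eta_App:
  "eta\<^sup>*\<^sup>* s s' \<Longrightarrow> eta\<^sup>*\<^sup>* t t' \<Longrightarrow> eta\<^sup>*\<^sup>* (App s t) (App s' t')"
  using rtranclp_map[of eta "\<lambda>s. App s t"] rtranclp_map[of eta "App s'"]
  by (meson eta.appL eta.appR rtranclp_trans)

lemma rtranclp_eta_Abs: "eta\<^sup>*\<^sup>* s s' \<Longrightarrow> eta\<^sup>*\<^sup>* (Abs s) (Abs s')"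
  by (rule rtranclp_map) (rule eta.abs)

lemma eta_lift: "eta s t \<Longrightarrow> eta (lift s k) (lift t k)"
proof (induct arbitrary: k rule: eta.induct)
  case (root s)
  then show ?case using eta.root[of "lift s k"] by (simp add: lift_lift)
qed (auto intro: eta.intros)

lemma eta_subst: "eta s t \<Longrightarrow> eta (subst s u i) (subst t u i)"
proof (induct arbitrary: u i rule: eta.induct)
  case (root s)
  then show ?case using eta.root[of "subst s u i"] by (simp add: lift_subst_lt)
qed (auto intro: eta.intros)

lemma rtranclp_eta_subst_arg: "eta s t \<Longrightarrow> eta\<^sup>*\<^sup>* (subst u s i) (subst u t i)"
proof (induct u arbitrary: s t i)
  case (Var n)
  then show ?case by (simp add: subst.simps(1) r_into_rtranclp)
next
  case (App u1 u2)
  then show ?case by (simp add: rtranclp_eta_App)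
next
  case (Abs u)
  then show ?case by (simp add: rtranclp_eta_Abs eta_lift)
qed

lemma eta_lift_inv: "eta (lift s k) t \<Longrightarrow> \<exists>s'. t = lift s' k \<and> eta s s'"
proof (induct "lift s k" t arbitrary: s k rule: eta.induct)
  case (root c)
  then obtain d where s: "s = Abs (App d (Var 0))" and "lift d (Suc k) = lift c 0"
    by (auto simp: Abs_eq_lift_iff App_eq_lift_iff Var_eq_lift_iff split: if_splits)
  then obtain c' where "d = lift c' 0" "c = lift c' k"
    using lift_Suc_eq_liftD by blast
  with s show ?case by (auto intro: eta.root)
qed (fastforce simp: Abs_eq_lift_iff App_eq_lift_iff Var_eq_lift_iff intro: eta.intros)+

lemma beta_lift_inv: "beta (lift s k) t \<Longrightarrow> \<exists>s'. t = lift s' k \<and> beta s s'"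
proof (induct "lift s k" t arbitrary: s k rule: beta.induct)
  case (root a b)
  then obtain a' b' where "s = App (Abs a') b'" "a = lift a' (Suc k)" "b = lift b' k"
    by (auto simp: Abs_eq_lift_iff App_eq_lift_iff)
  then show ?case
    by (intro exI[of _ "subst a' b' 0"] conjI) (simp_all add: lift_subst beta.root)
qed (fastforce simp: Abs_eq_lift_iff App_eq_lift_iff Var_eq_lift_iff intro: beta.intros)+

lemma eta_diamond: "eta x y \<Longrightarrow> eta x z \<Longrightarrow> \<exists>u. eta\<^sup>=\<^sup>= y u \<and> eta\<^sup>=\<^sup>= z u"
proof (induct arbitrary: z rule: eta.induct)
  case (root s)
  then show ?case by (auto dest!: eta_lift_inv intro: eta.root)
next
  case (appL s t u)
  then show ?case by (blast intro: eta.appL eta.appR)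
next
  case (appR s t u)
  then show ?case by (blast intro: eta.appL eta.appR)
next
  case (abs s t)
  then show ?case by (auto dest!: eta_lift_inv intro: eta.root eta.abs)
qed

lemma confluentp_eta: "confluentp eta"
proof (rule strong_confluentp_imp_confluentp, rule strong_confluentpI)
  show "\<exists>u. eta\<^sup>*\<^sup>* y u \<and> eta\<^sup>=\<^sup>= z u" if "eta x y" "eta x z" for x y z
    using eta_diamond[OF that] by (auto intro: r_into_rtranclp)
qed

lemma beta_root_eta_commute:
  assumes "eta (App (Abs a) b) z"
  shows "\<exists>u. eta\<^sup>*\<^sup>* (subst a b 0) u \<and> beta\<^sup>=\<^sup>= z u"
proof -
  from assms consider
      (contract) c where "a = App (lift c 0) (Var 0)" "z = App c b"
    | (body) a' where "eta a a'" "z = App (Abs a') b"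
    | (arg) b' where "eta b b'" "z = App (Abs a) b'"
    by blast
  then show ?thesis
  proof cases
    case contract
    then show ?thesis by auto
  next
    case (body a')
    then show ?thesis by (blast intro: eta_subst beta.root r_into_rtranclp)
  next
    case (arg b')
    then show ?thesis by (blast intro: rtranclp_eta_subst_arg beta.root)
  qed
qed

lemma eta_root_beta_commute:
  assumes "beta (App (lift c 0) (Var 0)) t"
  shows "\<exists>u. eta\<^sup>*\<^sup>* (Abs t) u \<and> beta\<^sup>=\<^sup>= c u"
proof -
  from assms consider (redex) "Abs t = c"
    | (func) c' where "t = App (lift c' 0) (Var 0)" "beta c c'"
    by (auto simp: Abs_eq_lift_iff eq_commute[of "lift _ _" "Abs _"] dest!: beta_lift_inv)
  then show ?thesis
  proof cases
    case redex
    then show ?thesis by auto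
  next
    case (func c')
    then show ?thesis by (auto intro: r_into_rtranclp eta.root)
  qed
qed

lemma beta_eta_commute: "beta x y \<Longrightarrow> eta x z \<Longrightarrow> \<exists>u. eta\<^sup>*\<^sup>* y u \<and> beta\<^sup>=\<^sup>= z u"
proof (induct arbitrary: z rule: beta.induct)
  case (root a b)
  then show ?case by (rule beta_root_eta_commute)
next
  case (appL s t u)
  from appL.prems consider (left) s' where "eta s s'" "z = App s' u"
    | (right) u' where "eta u u'" "z = App s u'"
    by blast
  then show ?case
  proof cases
    case (left s')
    with appL.hyps obtain v where "eta\<^sup>*\<^sup>* t v" "beta\<^sup>=\<^sup>= s' v" by blast
    with left show ?thesis by (auto intro: rtranclp_eta_App beta.appL)
  next
    case (right u')
    with appL.hyps(1) show ?thesis by (auto intro: r_into_rtranclp eta.appR beta.appL)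
  qed
next
  case (appR s t u)
  from appR.prems consider (left) u' where "eta u u'" "z = App u' s"
    | (right) s' where "eta s s'" "z = App u s'"
    by blast
  then show ?case
  proof cases
    case (left u')
    with appR.hyps(1) show ?thesis by (auto intro: r_into_rtranclp eta.appL beta.appR)
  next
    case (right s')
    with appR.hyps obtain v where "eta\<^sup>*\<^sup>* t v" "beta\<^sup>=\<^sup>= s' v" by blast
    with right show ?thesis by (auto intro: rtranclp_eta_App beta.appR)
  qed
next
  case (abs s t)
  from abs.prems consider (contract) c where "s = App (lift c 0) (Var 0)" "z = c"
    | (body) s' where "eta s s'" "z = Abs s'"
    by blast
  then show ?case
  proof cases
    case (contract c)
    with abs.hyps(1) show ?thesis using eta_root_beta_commute by simp
  next
    case (body s')
    with abs.hyps obtain v where "eta\<^sup>*\<^sup>* t v" "beta\<^sup>=\<^sup>= s' v" by blast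
    with body show ?thesis by (auto intro: rtranclp_eta_Abs beta.abs)
  qed
qed

lemma confluentp_beta_eta_step: "confluentp beta_eta_step"
  unfolding beta_eta_step_eq_sup
  by (rule confluentp_sup[OF confluentp_beta confluentp_eta rtranclp_commute[OF beta_eta_commute]])

theorem church_rosser:
  assumes "beta_eta_conv s t"
  shows "\<exists>u. beta_eta_step\<^sup>*\<^sup>* s u \<and> beta_eta_step\<^sup>*\<^sup>* t u"
proof -
  from assms have "equivclp beta_eta_step s t"
    by induct (auto intro: r_into_equivclp equivclp_sym equivclp_trans)
  then show ?thesis
    using confluentp_beta_eta_step
    by (auto simp: semiconfluentp_equivclp confluentp_eq_semiconfluentp rtranclp_conversep)
qed

fun is_Abs :: "dB \<Rightarrow> bool" where
  "is_Abs (Abs s) = True"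
| "is_Abs _ = False"

fun beta_normal :: "dB \<Rightarrow> bool" where
  "beta_normal (Var i) = True"
| "beta_normal (App s t) = (beta_normal s \<and> beta_normal t \<and> \<not> is_Abs s)"
| "beta_normal (Abs s) = beta_normal s"

lemma is_Abs_lift [simp]: "is_Abs (lift s k) = is_Abs s"
  by (cases s) auto

lemma beta_normal_lift [simp]: "beta_normal (lift s k) = beta_normal s"
  by (induct s arbitrary: k) auto

lemma beta_normal_step:
  "beta_eta_step s t \<Longrightarrow> beta_normal s \<Longrightarrow> beta_normal t \<and> (is_Abs t \<longrightarrow> is_Abs s)"
  by (induct rule: beta_eta_step.induct) auto

lemma beta_normal_rtranclp: "beta_eta_step\<^sup>*\<^sup>* s t \<Longrightarrow> beta_normal s \<Longrightarrow> beta_normal t"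
  by (induct rule: rtranclp_induct) (auto dest: beta_normal_step)

lemma beta_normal_church: "beta_normal (church n)"
proof -
  have "beta_normal (church_body n) \<and> \<not> is_Abs (church_body n)"
    by (induct n) auto
  then show ?thesis by (simp add: church_def)
qed

subsection \<open>Coding finite functions by numbers\<close>

definition digit :: "nat \<Rightarrow> nat \<Rightarrow> nat \<Rightarrow> nat" where
  "digit b g i = g div b ^ i mod b"

definition from_digits :: "nat \<Rightarrow> nat \<Rightarrow> (nat \<Rightarrow> nat) \<Rightarrow> nat" where
  "from_digits n b h = (\<Sum>i<n. h i * b ^ i)"

lemma from_digits_less: "(\<And>i. i < n \<Longrightarrow> h i < b) \<Longrightarrow> from_digits n b h < b ^ n"
proof (induct n)
  case 0
  then show ?case by (simp add: from_digits_def)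
next
  case (Suc n)
  then have "from_digits (Suc n) b h < b ^ n + h n * b ^ n"
    by (simp add: from_digits_def)
  also have "\<dots> \<le> b ^ Suc n"
    using Suc.prems[of n] by (simp add: mult_le_mono1 add.commute[of "b ^ n"] flip: mult_Suc)
  finally show ?case .
qed

lemma from_digits_Suc: "from_digits (Suc n) b h = h 0 + b * from_digits n b (\<lambda>i. h (Suc i))"
  unfolding from_digits_def
  by (simp add: sum.lessThan_Suc_shift sum_distrib_left algebra_simps del: sum.lessThan_Suc)

lemma digit_from_digits:
  "(\<And>i. i < n \<Longrightarrow> h i < b) \<Longrightarrow> i < n \<Longrightarrow> digit b (from_digits n b h) i = h i"
proof (induct n arbitrary: h i)
  case 0
  then show ?case by simp
next
  case (Suc n)
  then have "b > 0" by fastforce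
  show ?case
  proof (cases i)
    case 0
    then show ?thesis using Suc.prems by (simp add: digit_def from_digits_Suc)
  next
    case (Suc j)
    then have "digit b (from_digits (Suc n) b h) i = digit b (from_digits n b (\<lambda>i. h (Suc i))) j"
      using Suc.prems \<open>b > 0\<close> by (simp add: digit_def from_digits_Suc div_mult2_eq)
    also have "\<dots> = h i"
      using Suc.hyps[of "\<lambda>i. h (Suc i)" j] Suc.prems \<open>i = Suc j\<close> by simp
    finally show ?thesis .
  qed
qed

lemma from_digits_digit:
  assumes "g < b ^ n"
  shows "from_digits n b (digit b g) = g"
proof -
  have "from_digits n b (digit b g) = g mod b ^ n"
  proof (induct n)
    case (Suc n)
    then have "from_digits (Suc n) b (digit b g) = g mod b ^ n + b ^ n * (g div b ^ n mod b)"
      by (simp add: from_digits_def digit_def mult.commute)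
    also have "\<dots> = g mod b ^ Suc n"
      by (simp only: power_Suc2 mod_mult2_eq add.commute)
    finally show ?case .
  qed (simp add: from_digits_def)
  with assms show ?thesis by simp
qed

lemma from_digits_cong:
  "(\<And>i. i < n \<Longrightarrow> h i = h' i) \<Longrightarrow> from_digits n b h = from_digits n b h'"
  unfolding from_digits_def by simp

subsection \<open>Church-style terms and their finite semantics\<close>

definition shift :: "(nat \<Rightarrow> 'a) \<Rightarrow> nat \<Rightarrow> 'a \<Rightarrow> nat \<Rightarrow> 'a" where
  "shift e i a = (\<lambda>j. if j < i then e j else if j = i then a else e (j - 1))"

lemma shift_eq [simp]: "shift e i a i = a"
  and shift_lt [simp]: "j < i \<Longrightarrow> shift e i a j = e j"
  and shift_gt [simp]: "i < j \<Longrightarrow> shift e i a j = e (j - 1)"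
  and shift_0_Suc [simp]: "shift e 0 a (Suc j) = e j"
  by (simp_all add: shift_def)

lemma shift_commute: "shift (shift e i a) 0 b = shift (shift e 0 b) (Suc i) a"
  by (auto simp: shift_def fun_eq_iff)

(* AApp M N U records the result type U, AAbs T U M the argument and result types:
   exactly the data needed by the semantics below. *)
datatype aterm = AVar nat | AApp aterm aterm ty | AAbs ty ty aterm

primrec erase :: "aterm \<Rightarrow> dB" where
  "erase (AVar i) = Var i"
| "erase (AApp M N U) = App (erase M) (erase N)"
| "erase (AAbs T U M) = Abs (erase M)"

primrec alift :: "aterm \<Rightarrow> nat \<Rightarrow> aterm" where
  "alift (AVar i) k = (if i < k then AVar i else AVar (Suc i))"
| "alift (AApp M N U) k = AApp (alift M k) (alift N k) U"
| "alift (AAbs T U M) k = AAbs T U (alift M (Suc k))"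

primrec asubst :: "aterm \<Rightarrow> aterm \<Rightarrow> nat \<Rightarrow> aterm" where
  "asubst (AVar i) N k = (if k < i then AVar (i - 1) else if i = k then N else AVar i)"
| "asubst (AApp M M' U) N k = AApp (asubst M N k) (asubst M' N k) U"
| "asubst (AAbs T U M) N k = AAbs T U (asubst M (alift N 0) (Suc k))"

lemma erase_alift [simp]: "erase (alift M k) = lift (erase M) k"
  by (induct M arbitrary: k) auto

lemma erase_asubst [simp]: "erase (asubst M N k) = subst (erase M) (erase N) k"
  by (induct M arbitrary: N k) (auto simp: subst.simps(1))

lemma erase_eq_Var_iff [simp]: "erase M = Var i \<longleftrightarrow> M = AVar i"
  by (cases M) auto

lemma erase_eq_App_iff [simp]:
  "erase M = App s t \<longleftrightarrow> (\<exists>M1 M2 U. M = AApp M1 M2 U \<and> erase M1 = s \<and> erase M2 = t)"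
  by (cases M) auto

lemma erase_eq_Abs_iff [simp]:
  "erase M = Abs s \<longleftrightarrow> (\<exists>T U M1. M = AAbs T U M1 \<and> erase M1 = s)"
  by (cases M) auto

lemma erase_eq_lift: "erase M = lift s k \<Longrightarrow> \<exists>M0. M = alift M0 k \<and> erase M0 = s"
proof (induct M arbitrary: s k)
  case (AVar i)
  then show ?case by (auto simp: Var_eq_lift_iff split: if_splits intro: exI[of _ "AVar (i - 1)"])
next
  case (AApp M N U)
  then obtain s1 s2 where "s = App s1 s2" "erase M = lift s1 k" "erase N = lift s2 k"
    by (auto simp: App_eq_lift_iff)
  with AApp.hyps obtain M0 N0
    where "M = alift M0 k" "erase M0 = s1" "N = alift N0 k" "erase N0 = s2"
    by meson
  with \<open>s = App s1 s2\<close> show ?case by (intro exI[of _ "AApp M0 N0 U"]) simp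
next
  case (AAbs T U M)
  then obtain s1 where "s = Abs s1" "erase M = lift s1 (Suc k)"
    by (auto simp: Abs_eq_lift_iff)
  with AAbs.hyps obtain M0 where "M = alift M0 (Suc k)" "erase M0 = s1"
    by meson
  with \<open>s = Abs s1\<close> show ?case by (intro exI[of _ "AAbs T U M0"]) simp
qed

inductive has_type :: "(nat \<Rightarrow> ty) \<Rightarrow> aterm \<Rightarrow> ty \<Rightarrow> bool" where
  var: "has_type G (AVar i) (G i)"
| app: "has_type G M (Arr T U) \<Longrightarrow> has_type G N T \<Longrightarrow> has_type G (AApp M N U) U"
| abs: "has_type (shift G 0 T) M U \<Longrightarrow> has_type G (AAbs T U M) (Arr T U)"

inductive_cases has_type_AAppE [elim!]: "has_type G (AApp M N U) A"
inductive_cases has_type_AAbsE [elim!]: "has_type G (AAbs T U M) A"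

lemma has_type_var_iff [simp]: "has_type G (AVar i) A \<longleftrightarrow> A = G i"
  by (auto intro: has_type.var elim: has_type.cases)

lemma has_type_alift: "has_type G M A \<Longrightarrow> has_type (shift G k T) (alift M k) A"
proof (induct arbitrary: k rule: has_type.induct)
  case (abs G T M U)
  then show ?case by (auto simp: shift_commute intro: has_type.abs)
qed (auto simp: shift_def intro: has_type.intros)

lemma has_type_alift_inv: "has_type (shift G k T) (alift M k) A \<Longrightarrow> has_type G M A"
proof (induct M arbitrary: G k A)
  case (AVar i)
  then show ?case by (auto simp: shift_def split: if_splits)
next
  case (AApp M N U)
  from AApp.prems obtain T' where M: "has_type (shift G k T) (alift M k) (Arr T' U)"
    and N: "has_type (shift G k T) (alift N k) T'" and "A = U"
    by auto
  from AApp.hyps(1)[OF M] AApp.hyps(2)[OF N] \<open>A = U\<close> show ?case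
    by (simp add: has_type.app)
next
  case (AAbs T' U M)
  then show ?case by (auto simp: shift_commute intro: has_type.abs)
qed

lemma has_type_asubst:
  "has_type (shift G k T) M A \<Longrightarrow> has_type G N T \<Longrightarrow> has_type G (asubst M N k) A"
proof (induct "shift G k T" M A arbitrary: G k N rule: has_type.induct)
  case (var i)
  then show ?case by (auto simp: shift_def)
next
  case (app M T' U N')
  then have "has_type G (asubst M N k) (Arr T' U)" "has_type G (asubst N' N k) T'"
    by simp_all
  then show ?case by (simp add: has_type.app)
next
  case (abs T' M U)
  then show ?case by (auto simp: shift_commute intro!: has_type.abs has_type_alift)
qed

fun ty_card :: "ty \<Rightarrow> nat" where
  "ty_card ty.O = 2"
| "ty_card (Arr T U) = ty_card U ^ ty_card T"

lemma ty_card_ge_2: "2 \<le> ty_card T"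
proof (induct T)
  case (Arr T U)
  then have "ty_card U ^ 1 \<le> ty_card U ^ ty_card T"
    by (intro power_increasing) auto
  with Arr show ?case by simp
qed simp

lemma ty_card_pos [simp]: "0 < ty_card T"
  using ty_card_ge_2[of T] by simp

(* Since values of function type are coded by their tables of values, the model is
   extensional, which is what makes it sound for eta. *)
primrec sem :: "aterm \<Rightarrow> (nat \<Rightarrow> nat) \<Rightarrow> nat" where
  "sem (AVar i) r = r i"
| "sem (AApp M N U) r = digit (ty_card U) (sem M r) (sem N r)"
| "sem (AAbs T U M) r = from_digits (ty_card T) (ty_card U) (\<lambda>x. sem M (shift r 0 x))"

definition env_ok :: "(nat \<Rightarrow> ty) \<Rightarrow> (nat \<Rightarrow> nat) \<Rightarrow> bool" where
  "env_ok G r \<longleftrightarrow> (\<forall>i. r i < ty_card (G i))"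

lemma env_ok_shift: "env_ok G r \<Longrightarrow> x < ty_card T \<Longrightarrow> env_ok (shift G k T) (shift r k x)"
  by (simp add: env_ok_def shift_def)

lemma sem_alift: "sem (alift M k) (shift r k x) = sem M r"
  by (induct M arbitrary: k r) (simp_all add: shift_commute)

lemma sem_asubst: "sem (asubst M N k) r = sem M (shift r k (sem N r))"
  by (induct M arbitrary: N k r) (simp_all add: shift_commute sem_alift)

lemma sem_less: "has_type G M A \<Longrightarrow> env_ok G r \<Longrightarrow> sem M r < ty_card A"
proof (induct arbitrary: r rule: has_type.induct)
  case (var G i)
  then show ?case by (simp add: env_ok_def)
next
  case (app G M T U N)
  then show ?case by (simp add: digit_def)
next
  case (abs T G M U)
  then show ?case by (simp add: from_digits_less env_ok_shift)
qed

lemma sem_beta_redex: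
  assumes "has_type G (AApp (AAbs T' U' M) N U) A"
  shows "has_type G (asubst M N 0) A"
    and "env_ok G r \<Longrightarrow> sem (asubst M N 0) r = sem (AApp (AAbs T' U' M) N U) r"
proof -
  from assms have M: "has_type (shift G 0 T') M U" and N: "has_type G N T'" and "U' = U" "A = U"
    by auto
  with N show "has_type G (asubst M N 0) A"
    by (simp add: has_type_asubst)
  assume r: "env_ok G r"
  have "sem (AApp (AAbs T' U' M) N U) r = sem M (shift r 0 (sem N r))"
    using \<open>U' = U\<close> sem_less[OF N r] sem_less[OF M env_ok_shift[OF r]]
    by (simp add: digit_from_digits)
  then show "sem (asubst M N 0) r = sem (AApp (AAbs T' U' M) N U) r"
    by (simp add: sem_asubst)
qed

lemma sem_eta_redex:
  assumes "has_type G (AAbs T U (AApp (alift M 0) (AVar 0) U')) A"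
  shows "has_type G M A"
    and "env_ok G r \<Longrightarrow> sem M r = sem (AAbs T U (AApp (alift M 0) (AVar 0) U')) r"
proof -
  from assms have "has_type (shift G 0 T) (alift M 0) (Arr T U)" "U' = U" "A = Arr T U"
    by auto
  then show M: "has_type G M A"
    by (auto intro: has_type_alift_inv)
  assume r: "env_ok G r"
  have "sem (AAbs T U (AApp (alift M 0) (AVar 0) U')) r =
      from_digits (ty_card T) (ty_card U) (digit (ty_card U) (sem M r))"
    using \<open>U' = U\<close> by (simp add: sem_alift)
  also have "\<dots> = sem M r"
    using sem_less[OF M r] \<open>A = Arr T U\<close> by (simp add: from_digits_digit)
  finally show "sem M r = sem (AAbs T U (AApp (alift M 0) (AVar 0) U')) r" ..
qed

lemma subject_reduction:
  "beta_eta_step s t \<Longrightarrow> erase M = s \<Longrightarrow> has_type G M A \<Longrightarrow>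
   \<exists>M'. erase M' = t \<and> has_type G M' A \<and> (\<forall>r. env_ok G r \<longrightarrow> sem M' r = sem M r)"
proof (induct arbitrary: M G A rule: beta_eta_step.induct)
  case (beta s t)
  then obtain T U M1 N U' where "M = AApp (AAbs T U M1) N U'" "erase M1 = s" "erase N = t"
    by auto
  with beta.prems(2) show ?case
    by (intro exI[of _ "asubst M1 N 0"]) (auto simp: sem_beta_redex)
next
  case (eta s)
  then obtain T U M1 U' where M: "M = AAbs T U (AApp M1 (AVar 0) U')" "erase M1 = lift s 0"
    by auto
  then obtain M0 where "M1 = alift M0 0" "erase M0 = s"
    using erase_eq_lift by blast
  with M eta.prems(2) show ?case
    by (intro exI[of _ M0]) (auto simp: sem_eta_redex)
next
  case (appL s t u)
  then obtain M1 N U T where M: "M = AApp M1 N U" "erase M1 = s" "erase N = u"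
    and "has_type G M1 (Arr T U)" "has_type G N T" "A = U"
    by auto
  with appL.hyps(2) obtain M1' where "erase M1' = t" "has_type G M1' (Arr T U)"
      "\<forall>r. env_ok G r \<longrightarrow> sem M1' r = sem M1 r"
    by blast
  with M \<open>has_type G N T\<close> \<open>A = U\<close> show ?case
    by (intro exI[of _ "AApp M1' N U"]) (auto intro: has_type.app)
next
  case (appR s t u)
  then obtain M1 N U T where M: "M = AApp M1 N U" "erase M1 = u" "erase N = s"
    and "has_type G M1 (Arr T U)" "has_type G N T" "A = U"
    by auto
  with appR.hyps(2) obtain N' where "erase N' = t" "has_type G N' T"
      "\<forall>r. env_ok G r \<longrightarrow> sem N' r = sem N r"
    by blast
  with M \<open>has_type G M1 (Arr T U)\<close> \<open>A = U\<close> show ?case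
    by (intro exI[of _ "AApp M1 N' U"]) (auto intro: has_type.app)
next
  case (abs s t)
  then obtain T U M1 where M: "M = AAbs T U M1" "erase M1 = s"
    and "has_type (shift G 0 T) M1 U" "A = Arr T U"
    by auto
  with abs.hyps(2) obtain M1' where "erase M1' = t" "has_type (shift G 0 T) M1' U"
      "\<forall>r. env_ok (shift G 0 T) r \<longrightarrow> sem M1' r = sem M1 r"
    by blast
  with M \<open>A = Arr T U\<close> show ?case
    by (intro exI[of _ "AAbs T U M1'"]) (auto intro: has_type.abs from_digits_cong env_ok_shift)
qed

lemma subject_reduction_rtranclp:
  "beta_eta_step\<^sup>*\<^sup>* s t \<Longrightarrow> erase M = s \<Longrightarrow> has_type G M A \<Longrightarrow>
   \<exists>M'. erase M' = t \<and> has_type G M' A \<and> (\<forall>r. env_ok G r \<longrightarrow> sem M' r = sem M r)"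
proof (induct arbitrary: M rule: rtranclp_induct)
  case (step t t')
  then obtain M1 where "erase M1 = t" "has_type G M1 A" "\<forall>r. env_ok G r \<longrightarrow> sem M1 r = sem M r"
    by blast
  with subject_reduction[OF step.hyps(2)] show ?case
    by fastforce
qed blast

subsection \<open>From conversion to equality in the model\<close>

(* Bidirectional typing: a beta-normal term other than an abstraction has a variable head and
   so determines its type, and every beta-normal term determines its annotation once its type
   is fixed. *)
lemma annotation_unique:
  "beta_normal t \<Longrightarrow> erase M = t \<Longrightarrow> erase M' = t \<Longrightarrow> has_type G M A \<Longrightarrow> has_type G M' A' \<Longrightarrow>
   (\<not> is_Abs t \<longrightarrow> A = A') \<and> (A = A' \<longrightarrow> M = M')"
proof (induct t arbitrary: M M' G A A')
  case (Var i)
  then show ?case by auto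
next
  case (App s u)
  from App.prems(2) obtain M1 N U where M: "M = AApp M1 N U" "erase M1 = s" "erase N = u"
    by auto
  from App.prems(3) obtain M1' N' U' where M': "M' = AApp M1' N' U'" "erase M1' = s" "erase N' = u"
    by auto
  from App.prems(4) M obtain T where M1: "has_type G M1 (Arr T U)" and N: "has_type G N T"
    and "A = U"
    by auto
  from App.prems(5) M' obtain T' where M1': "has_type G M1' (Arr T' U')" and N': "has_type G N' T'"
    and "A' = U'"
    by auto
  from App.prems(1) have normal: "beta_normal s" "beta_normal u" "\<not> is_Abs s"
    by simp_all
  with App.hyps(1)[OF normal(1) M(2) M'(2) M1 M1'] have "M1 = M1'" "T = T'" "U = U'"
    by simp_all
  with App.hyps(2)[OF normal(2) M(3) M'(3) N N'] have "N = N'"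
    by simp
  with M M' \<open>M1 = M1'\<close> \<open>U = U'\<close> \<open>A = U\<close> \<open>A' = U'\<close> show ?case
    by simp
next
  case (Abs s)
  from Abs.prems(2) obtain T U M1 where M: "M = AAbs T U M1" "erase M1 = s"
    by auto
  from Abs.prems(3) obtain T' U' M1' where M': "M' = AAbs T' U' M1'" "erase M1' = s"
    by auto
  from Abs.prems(4,5) M M' have "has_type (shift G 0 T) M1 U" "A = Arr T U"
    "has_type (shift G 0 T') M1' U'" "A' = Arr T' U'"
    by auto
  with Abs.hyps Abs.prems(1) M M' show ?case
    by auto
qed

lemma typing_imp_has_type:
  "typing \<Gamma> t A \<Longrightarrow> (\<And>i. i < length \<Gamma> \<Longrightarrow> G i = \<Gamma> ! i) \<Longrightarrow> \<exists>M. erase M = t \<and> has_type G M A"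
proof (induct arbitrary: G rule: typing.induct)
  case (var i \<Gamma> T)
  then show ?case by (intro exI[of _ "AVar i"]) simp
next
  case (abs T \<Gamma> t U)
  have "shift G 0 T i = (T # \<Gamma>) ! i" if "i < length (T # \<Gamma>)" for i
    using that abs.prems by (cases i) auto
  with abs.hyps obtain M where "erase M = t" "has_type (shift G 0 T) M U"
    by blast
  then show ?case by (intro exI[of _ "AAbs T U M"]) (auto intro: has_type.abs)
next
  case (app \<Gamma> s T U t)
  then obtain M N where "erase M = s" "has_type G M (Arr T U)" "erase N = t" "has_type G N T"
    by blast
  then show ?case by (intro exI[of _ "AApp M N U"]) (auto intro: has_type.app)
qed

lemma sem_eq_if_beta_eta_conv:
  assumes "beta_eta_conv (erase M) (erase N)" "beta_normal (erase N)"
    and "has_type G M A" "has_type G N A" "env_ok G r"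
  shows "sem M r = sem N r"
proof -
  obtain u where u: "beta_eta_step\<^sup>*\<^sup>* (erase M) u" "beta_eta_step\<^sup>*\<^sup>* (erase N) u"
    using church_rosser[OF assms(1)] by blast
  obtain M' where M': "erase M' = u" "has_type G M' A" "sem M' r = sem M r"
    using subject_reduction_rtranclp[OF u(1) HOL.refl assms(3)] assms(5) by blast
  obtain N' where N': "erase N' = u" "has_type G N' A" "sem N' r = sem N r"
    using subject_reduction_rtranclp[OF u(2) HOL.refl assms(4)] assms(5) by blast
  have "beta_normal u"
    using beta_normal_rtranclp[OF u(2) assms(2)] .
  then have "M' = N'"
    using annotation_unique[OF _ M'(1) N'(1) M'(2) N'(2)] by blast
  with M' N' show ?thesis by simp
qed

subsection \<open>Church numerals in the finite model\<close>

primrec achurch_body :: "ty \<Rightarrow> nat \<Rightarrow> aterm" where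
  "achurch_body \<tau> 0 = AVar 0"
| "achurch_body \<tau> (Suc n) = AApp (AVar 1) (achurch_body \<tau> n) \<tau>"

definition achurch :: "ty \<Rightarrow> nat \<Rightarrow> aterm" where
  "achurch \<tau> n = AAbs (Arr \<tau> \<tau>) (Arr \<tau> \<tau>) (AAbs \<tau> \<tau> (achurch_body \<tau> n))"

definition church_sem :: "ty \<Rightarrow> nat \<Rightarrow> nat" where
  "church_sem \<tau> n = from_digits (ty_card (Arr \<tau> \<tau>)) (ty_card (Arr \<tau> \<tau>))
     (\<lambda>f. from_digits (ty_card \<tau>) (ty_card \<tau>) (digit (ty_card \<tau>) f ^^ n))"

lemma erase_achurch: "erase (achurch \<tau> n) = church n"
proof -
  have "erase (achurch_body \<tau> n) = church_body n"
    by (induct n) simp_all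
  then show ?thesis by (simp add: achurch_def church_def)
qed

lemma has_type_achurch: "has_type G (achurch \<tau> n) (omega \<tau>)"
proof -
  have "has_type (shift (shift G 0 (Arr \<tau> \<tau>)) 0 \<tau>) (achurch_body \<tau> n) \<tau>"
    by (induct n) (auto intro: has_type.app)
  then show ?thesis by (auto simp: achurch_def omega_def intro!: has_type.abs)
qed

lemma sem_achurch: "sem (achurch \<tau> n) r = church_sem \<tau> n"
proof -
  have "sem (achurch_body \<tau> n) (shift (shift r 0 f) 0 x) = (digit (ty_card \<tau>) f ^^ n) x" for f x
    by (induct n) simp_all
  then show ?thesis by (simp add: achurch_def church_sem_def)
qed

lemma digit_church_sem:
  assumes "f < ty_card (Arr \<tau> \<tau>)" "x < ty_card \<tau>"
  shows "digit (ty_card \<tau>) (digit (ty_card (Arr \<tau> \<tau>)) (church_sem \<tau> n) f) x =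
    (digit (ty_card \<tau>) f ^^ n) x"
proof -
  let ?c = "ty_card \<tau>"
  have iterate_less: "(digit ?c g ^^ n) y < ?c" if "y < ?c" for g y
    using that by (induct n) (simp_all add: digit_def)
  then have "from_digits ?c ?c (digit ?c g ^^ n) < ?c ^ ?c" for g
    by (simp add: from_digits_less)
  then have "digit (?c ^ ?c) (church_sem \<tau> n) f = from_digits ?c ?c (digit ?c f ^^ n)"
    using assms(1) by (simp add: church_sem_def digit_from_digits)
  then show ?thesis
    using assms(2) iterate_less by (simp add: digit_from_digits)
qed

lemma finite_range_church_sem: "finite (range (church_sem \<tau>))"
proof -
  have "church_sem \<tau> n < ty_card (omega \<tau>)" for n
    using sem_less[OF has_type_achurch, of "\<lambda>_. ty.O" "\<lambda>_. 0" \<tau> n]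
    by (simp add: sem_achurch env_ok_def)
  then have "range (church_sem \<tau>) \<subseteq> {..<ty_card (omega \<tau>)}"
    by auto
  then show ?thesis
    by (rule finite_subset) simp
qed

lemma church_sem_Suc_cong:
  assumes "church_sem \<tau> m = church_sem \<tau> n"
  shows "church_sem \<tau> (Suc m) = church_sem \<tau> (Suc n)"
proof -
  have "(digit (ty_card \<tau>) f ^^ Suc m) x = (digit (ty_card \<tau>) f ^^ Suc n) x"
    if "f < ty_card (Arr \<tau> \<tau>)" "x < ty_card \<tau>" for f x
    using digit_church_sem[OF that, of m] digit_church_sem[OF that, of n] assms by simp
  then show ?thesis
    unfolding church_sem_def by (intro from_digits_cong) simp
qed

lemma church_sem_parity:
  assumes "church_sem \<tau> m = church_sem \<tau> n"
  shows "even m \<longleftrightarrow> even n"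
proof -
  define flip where "flip = from_digits (ty_card \<tau>) (ty_card \<tau>) (\<lambda>x. of_bool (x = 0))"
  have card: "2 \<le> ty_card \<tau>"
    by (rule ty_card_ge_2)
  then have flip: "flip < ty_card (Arr \<tau> \<tau>)"
    unfolding flip_def by (simp add: from_digits_less)
  have flip_iterate: "(digit (ty_card \<tau>) flip ^^ k) 0 = k mod 2" for k
  proof (induct k)
    case (Suc k)
    have "k mod 2 < ty_card \<tau>"
      using card by (simp add: less_le_trans[of _ 2])
    with Suc card show ?case
      by (simp add: flip_def digit_from_digits mod_Suc)
  qed simp
  have "m mod 2 = n mod 2"
    using digit_church_sem[OF flip ty_card_pos, of m] digit_church_sem[OF flip ty_card_pos, of n]
    by (simp add: assms flip_iterate)
  then show ?thesis
    by (simp add: even_iff_mod_2_eq_zero)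
qed

subsection \<open>Periodicity and halving\<close>

lemma eventually_periodic:
  fixes s :: "nat \<Rightarrow> 'a"
  assumes "finite (range s)" and step: "\<And>m n. s m = s n \<Longrightarrow> s (Suc m) = s (Suc n)"
  obtains N p where "0 < p" "\<And>n. N \<le> n \<Longrightarrow> s (n + p) = s n"
proof -
  have "\<not> inj s"
    using assms(1) finite_imageD by blast
  then obtain x y where "x \<noteq> y" "s x = s y"
    unfolding inj_def by blast
  then obtain a b where "a < b" "s a = s b"
    by (metis linorder_neqE_nat)
  have offset: "s (a + t) = s (b + t)" for t
  proof (induct t)
    case (Suc t)
    then show ?case using step[of "a + t" "b + t"] by simp
  qed (simp add: \<open>s a = s b\<close>)
  show thesis
  proof
    show "0 < b - a" using \<open>a < b\<close> by simp
    show "s (n + (b - a)) = s n" if "a \<le> n" for n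
      using offset[of "n - a"] that \<open>a < b\<close> by (simp add: add.commute)
  qed
qed

lemma odd_period_if_halving:
  fixes s :: "nat \<Rightarrow> 'a"
  assumes halving: "\<And>n. F (s n) = s (n div 2)"
    and "0 < p" "\<And>n. N \<le> n \<Longrightarrow> s (n + p) = s n"
  shows "\<exists>q. odd q \<and> (\<forall>n\<ge>N. s (n + q) = s n)"
  using assms(2,3)
proof (induct p rule: less_induct)
  case (less p)
  show ?case
  proof (cases "odd p")
    case True
    with less.prems show ?thesis by blast
  next
    case False
    then obtain q where p: "p = 2 * q" by blast
    have "s (n + q) = s n" if "N \<le> n" for n
    proof -
      have "s (n + q) = F (s (2 * n + p))"
        using halving[of "2 * n + p"] p by simp
      also have "\<dots> = F (s (2 * n))"
        using less.prems(2) that by simp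
      also have "\<dots> = s n"
        using halving[of "2 * n"] by simp
      finally show ?thesis .
    qed
    moreover have "0 < q" "q < p"
      using less.prems(1) p by simp_all
    ultimately show ?thesis
      using less.hyps by blast
  qed
qed

lemma definable_church_sem_map:
  assumes "typing [] E (Arr (omega \<tau>) (omega \<tau>))"
    and "\<And>n. beta_eta_conv (App E (church n)) (church (f n))"
  obtains e where "\<And>n. digit (ty_card (omega \<tau>)) e (church_sem \<tau> n) = church_sem \<tau> (f n)"
proof -
  define G :: "nat \<Rightarrow> ty" where "G = (\<lambda>_. ty.O)"
  define r :: "nat \<Rightarrow> nat" where "r = (\<lambda>_. 0)"
  have r: "env_ok G r"
    by (simp add: env_ok_def G_def r_def)
  obtain M where M: "erase M = E" "has_type G M (Arr (omega \<tau>) (omega \<tau>))"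
    using typing_imp_has_type[OF assms(1)] by auto
  have "sem (AApp M (achurch \<tau> n) (omega \<tau>)) r = sem (achurch \<tau> (f n)) r" for n
    using assms(2) M
    by (intro sem_eq_if_beta_eta_conv[OF _ _ _ has_type_achurch r])
      (auto simp: erase_achurch beta_normal_church intro: has_type.app has_type_achurch)
  then show thesis
    by (intro that[of "sem M r"]) (simp add: sem_achurch)
qed

theorem proposition3:
  shows "\<not> strictly_definable1 (\<lambda>n::nat. n div 2)"
proof
  assume "strictly_definable1 (\<lambda>n::nat. n div 2)"
  then obtain \<tau> E where "typing [] E (Arr (omega \<tau>) (omega \<tau>))"
    and "\<And>n. beta_eta_conv (App E (church n)) (church (n div 2))"
    unfolding strictly_definable1_def by blast
  then obtain e
    where halving: "\<And>n. digit (ty_card (omega \<tau>)) e (church_sem \<tau> n) = church_sem \<tau> (n div 2)"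
    by (rule definable_church_sem_map) auto
  obtain N p where "0 < p" "\<And>n. N \<le> n \<Longrightarrow> church_sem \<tau> (n + p) = church_sem \<tau> n"
    using finite_range_church_sem church_sem_Suc_cong by (rule eventually_periodic) auto
  then obtain q where "odd q" "church_sem \<tau> (N + q) = church_sem \<tau> N"
    using odd_period_if_halving[where s = "church_sem \<tau>", OF halving] by blast
  then show False
    using church_sem_parity[of \<tau> "N + q" N] by simp
qed

end
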